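(* Let $E_2=R[w_2,w_3,\dots]$ be the $E_2$ page described in the context, set $W_+=k[b_{10}^{\pm1}][w_2,w_3,\dots]$ and $W_-=h_{10}W_+$, so $E_2=W_+\oplus W_-$. Let $x\in E_2$ be a nonzero element lying in a single filtration $s$ and a single degree $u'=u-6(s+t)$. If $u'\equiv 0\pmod 4$, then $x\in W_+$ and $s\equiv -u'\pmod 9$. Otherwise $u'\equiv 2\pmod 4$, in which case $x\in W_-$ and $s\equiv 7-u'\pmod 9$.
   Context: $k=\mathbb{F}_3$, $R=E[h_{10}]\otimes k[b_{10}^{\pm1}]$. The spectral sequence is the $b_{10}$-localized $K(\xi_1)$-based Adams spectral sequence converging to $b_{10}^{-1}\operatorname{Ext}_P(\mathbb{F}_3,\mathbb{F}_3)$ ($P$ the dual reduced powers at $p=3$), trigraded by filtration $s$, internal homological degree $t$ and internal topological degree $u$, with $E_2\cong R[w_2,w_3,\dots]$ a polynomial $R$-algebra. Degrees: $h_{10}$ has $(s,t,u)=(0,1,4)$, $b_{10}$ has $(0,2,12)$, $w_n$ ($n\geq2$) has $(1,1,2(3^n+1))$. Hence $u'(h_{10})=-2$, $u'(b_{10})=0$, $u'(w_n)=2(3^n-5)$. *)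

theory Defs
  imports Main "HOL-Library.Poly_Mapping" "HOL-Library.Numeral_Type" "HOL-Number_Theory.Cong"
begin

text \<open>Monomials of E_2 = E[h10] (x) k[b10^(+-1)] (x) k[w_2,w_3,...]:
  a triple (e, j, a) stands for h10^e b10^j prod_n w_n^(a n),
  where e : bool (exponent of h10, 0 or 1), j : int, and a : nat =>0 nat
  is a finitely supported exponent vector with support in {2..}.\<close>

type_synonym mon = "bool \<times> int \<times> (nat \<Rightarrow>\<^sub>0 nat)"

definition valid_mon :: "mon \<Rightarrow> bool" where
  "valid_mon m = (\<forall>n\<in>Poly_Mapping.keys (snd (snd m)). 2 \<le> n)"

definition E2 :: "(mon \<Rightarrow>\<^sub>0 3) set" where
  "E2 = {x. \<forall>m\<in>Poly_Mapping.keys x. valid_mon m}"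

definition deg_s :: "mon \<Rightarrow> int" where
  "deg_s m = (\<Sum>n\<in>Poly_Mapping.keys (snd (snd m)). int (Poly_Mapping.lookup (snd (snd m)) n))"

definition deg_t :: "mon \<Rightarrow> int" where
  "deg_t m = (if fst m then 1 else 0) + 2 * fst (snd m)
             + (\<Sum>n\<in>Poly_Mapping.keys (snd (snd m)). int (Poly_Mapping.lookup (snd (snd m)) n))"

definition deg_u :: "mon \<Rightarrow> int" where
  "deg_u m = (if fst m then 4 else 0) + 12 * fst (snd m)
             + (\<Sum>n\<in>Poly_Mapping.keys (snd (snd m)). int (Poly_Mapping.lookup (snd (snd m)) n) * (2 * (3 ^ n + 1)))"

definition deg_u' :: "mon \<Rightarrow> int" where
  "deg_u' m = deg_u m - 6 * (deg_s m + deg_t m)"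

definition W_plus :: "(mon \<Rightarrow>\<^sub>0 3) set" where
  "W_plus = {x\<in>E2. \<forall>m\<in>Poly_Mapping.keys x. \<not> fst m}"

definition W_minus :: "(mon \<Rightarrow>\<^sub>0 3) set" where
  "W_minus = {x\<in>E2. \<forall>m\<in>Poly_Mapping.keys x. fst m}"

end

theory Submission
  imports Defs
begin

text \<open>Since 3^n \<equiv> 9 (mod 18) for n \<ge> 2, every w_n has u'-degree 2 * 3^n - 10 \<equiv> 8 (mod 36),
  while h10 has u'-degree -2 and b10 has u'-degree 0. Hence a monomial with h10-exponent e and
  filtration s has u' \<equiv> 8 s - 2 e (mod 36). Reducing mod 4 determines e, and reducing mod 9
  gives s \<equiv> -u' - 2 e.\<close>

lemma w_degree_cong:
  assumes "2 \<le> n"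
  shows "[2 * (3 ^ n + 1) = (20::int)] (mod 36)"
proof -
  obtain r where r: "n = r + 2" using assms by (metis add.commute le_Suc_ex)
  have "odd ((3::int) ^ r)" by simp
  then obtain c where c: "(3::int) ^ r = 2 * c + 1" by (rule oddE)
  have "2 * ((3::int) ^ n + 1) = 20 + 36 * c" by (simp add: r power_add c)
  then show ?thesis by (simp add: cong_iff_dvd_diff)
qed

lemma deg_u'_cong:
  assumes "valid_mon m"
  shows "[deg_u' m = 8 * deg_s m - 2 * of_bool (fst m)] (mod 36)"
proof -
  define a where "a = snd (snd m)"
  define f where "f = (\<lambda>n. int (Poly_Mapping.lookup a n))"
  define U where "U = (\<Sum>n\<in>Poly_Mapping.keys a. f n * (2 * (3 ^ n + 1)))"
  have s: "deg_s m = (\<Sum>n\<in>Poly_Mapping.keys a. f n)"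
    by (simp add: deg_s_def a_def f_def)
  have u': "deg_u' m = U - 12 * deg_s m - 2 * of_bool (fst m)"
    by (cases "fst m") (simp_all add: deg_u'_def deg_u_def deg_t_def deg_s_def U_def a_def f_def)
  have "[U = (\<Sum>n\<in>Poly_Mapping.keys a. f n * 20)] (mod 36)"
    unfolding U_def
  proof (rule cong_sum)
    fix n assume "n \<in> Poly_Mapping.keys a"
    then have "2 \<le> n" using assms by (simp add: valid_mon_def a_def)
    then show "[f n * (2 * (3 ^ n + 1)) = f n * 20] (mod 36)"
      by (intro cong_mult cong_refl w_degree_cong)
  qed
  then have "[U = 20 * deg_s m] (mod 36)"
    by (simp add: s sum_distrib_right[symmetric] mult.commute)
  then have "[U - 12 * deg_s m - 2 * of_bool (fst m)
      = 20 * deg_s m - 12 * deg_s m - 2 * of_bool (fst m)] (mod 36)"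
    by (intro cong_diff cong_refl)
  then show ?thesis by (simp add: u')
qed

lemma h10_exponent_from_mod_4:
  fixes u' s :: int
  assumes "[u' = 8 * s - 2 * of_bool e] (mod 36)"
  shows "u' mod 4 = (if e then 2 else 0)"
proof -
  obtain k where k: "u' = 8 * s - 2 * of_bool e + 36 * k"
    using assms by (metis cong_iff_lin cong_sym add.commute)
  have "u' = (if e then 2 else 0) + 4 * (2 * s + 9 * k - of_bool e)"
    by (cases e) (simp_all add: k algebra_simps)
  then have "u' mod 4 = (if e then 2 else 0) mod 4" by (metis mod_mult_self2)
  then show ?thesis by simp
qed

lemma filtration_from_mod_9:
  fixes u' s :: int
  assumes "[u' = 8 * s - 2 * of_bool e] (mod 36)"
  shows "[s = (if e then 7 else 0) - u'] (mod 9)"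
proof -
  obtain k where k: "u' = 8 * s - 2 * of_bool e + 36 * k"
    using assms by (metis cong_iff_lin cong_sym add.commute)
  have "s - ((if e then 7 else 0) - u') = 9 * (s - of_bool e + 4 * k)"
    by (cases e) (simp_all add: k algebra_simps)
  then have "9 dvd s - ((if e then 7 else 0) - u')" by (metis dvd_triv_left)
  then show ?thesis by (simp only: cong_iff_dvd_diff)
qed

theorem lemma2p2:
  fixes x :: "mon \<Rightarrow>\<^sub>0 3" and s u' :: int
  assumes "x \<in> E2" and "x \<noteq> 0"
    and "\<forall>m\<in>Poly_Mapping.keys x. deg_s m = s \<and> deg_u' m = u'"
  shows "(u' mod 4 = 0 \<longrightarrow> x \<in> W_plus \<and> [s = - u'] (mod 9))
       \<and> (u' mod 4 \<noteq> 0 \<longrightarrow> u' mod 4 = 2 \<and> x \<in> W_minus \<and> [s = 7 - u'] (mod 9))"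
proof -
  have key: "[u' = 8 * s - 2 * of_bool (fst m)] (mod 36)" if "m \<in> Poly_Mapping.keys x" for m
    using deg_u'_cong[of m] assms(1,3) that by (simp add: E2_def)
  have h10: "fst m \<longleftrightarrow> u' mod 4 = 2" if "m \<in> Poly_Mapping.keys x" for m
    using h10_exponent_from_mod_4[OF key[OF that]] by auto
  obtain m0 where m0: "m0 \<in> Poly_Mapping.keys x"
    using assms(2) by (metis all_not_in_conv keys_eq_empty)
  have "x \<in> (if u' mod 4 = 2 then W_minus else W_plus)"
    using h10 assms(1) by (auto simp: W_minus_def W_plus_def)
  moreover have "u' mod 4 = (if fst m0 then 2 else 0)"
    using h10_exponent_from_mod_4[OF key[OF m0]] .
  moreover have "[s = (if fst m0 then 7 else 0) - u'] (mod 9)"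
    using filtration_from_mod_9[OF key[OF m0]] .
  ultimately show ?thesis by (cases "fst m0") auto
qed

end
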